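(* For any local epistemic model $\mathcal{M}=(W,\delta,\{R_a\}_{a\in\mathbf{A}},\rho)$, its properization $\mathcal{M}^{pr}$ is a well-defined proper local epistemic model such that for every $w\in W$, $\mathcal{M},w$ and $\mathcal{M}^{pr},[w]_\delta$ are bisimilar (and hence $\mathcal{L}$-logically equivalent). In particular, if $\mathcal{M}$ is already a proper local epistemic model, then $\mathcal{M}$ is isomorphic to $\mathcal{M}^{pr}$.
   Context: Fix a nonempty finite set $\mathbf{A}$ of agents, a countable set $\mathbf{X}$ of variables disjoint from $\mathbf{A}$, and a countable set $\mathbf{P}$ of predicate letters. Formulas of $\mathcal{L}$: $\phi ::= p_x \mid \top \mid \neg\phi \mid (\phi\wedge\phi) \mid [x:=a]\phi \mid \mathsf{K}_X\alpha$ ($p\in\mathbf{P}$, $x\in\mathbf{X}$, $a\in\mathbf{A}$, $X\subseteq\mathbf{X}$ finite, $\alpha$ a formula without free variables), with $FV(p_x)=\{x\}$, $FV(\top)=\emptyset$, $FV$ of $\neg,\wedge$ as usual, $FV([x:=a]\phi)=FV(\phi)\setminus\{x\}$, $FV(\mathsf{K}_X\alpha)=X$; sentences are formulas without free variables. A first-order Kripke model is $\mathcal{M}=(W,\delta,\{R_a\}_{a\in\mathbf{A}},\rho)$ with $W\neq\emptyset$, $\delta:W\to\wp(\mathbf{A})\setminus\{\emptyset\}$, $R_a\subseteq W\times W$ with $R_a(w)=\emptyset$ if $a\notin\delta(w)$, and $\rho:\mathbf{P}\times W\to\wp(\mathbf{A})$ with $\rho(p,w)\subseteq\delta(w)$.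 Semantics with assignments $\sigma:\mathbf{X}\to\mathbf{A}$ admissible (i.e. $\sigma[FV(\phi)]\subseteq\delta(w)$): $\mathcal{M},w,\sigma\vDash p_x$ iff $\sigma(x)\in\rho(p,w)$; Booleans standard; $\mathcal{M},w,\sigma\vDash[x:=a]\phi$ iff ($a\in\delta(w)$ implies $\mathcal{M},w,\sigma[x\mapsto a]\vDash\phi$); $\mathcal{M},w,\sigma\vDash\mathsf{K}_X\alpha$ iff $\mathcal{M},v,\sigma\vDash\alpha$ for all $v\in\bigcap_{a\in\sigma[X]}R_a(w)$ (empty intersection $=W$). Pointed models are $\mathcal{L}$-logically equivalent if they satisfy the same sentences. A bisimulation between $\mathcal{M},\mathcal{N}$ is $Z\subseteq W^{\mathcal M}\times W^{\mathcal N}$ such that for $(w,v)\in Z$: $\delta^{\mathcal M}(w)=\delta^{\mathcal N}(v)$ and $\rho^{\mathcal M}(p,w)=\rho^{\mathcal N}(p,v)$ for all $p$; for all $A\subseteq\mathbf{A}$ and $w'\in\bigcap_{a\in A}R^{\mathcal M}_a(w)$ there is $v'\in\bigcap_{a\in A}R^{\mathcal N}_a(v)$ with $(w',v')\in Z$; and symmetrically. $\mathcal{M},w$ and $\mathcal{N},v$ are bisimilar if some bisimulation contains $(w,v)$. An isomorphism $\mathcal{M}\cong\mathcal{N}$ is a bijection $f:W^{\mathcal M}\to W^{\mathcal N}$ with $\delta^{\mathcal N}(f(w))=\delta^{\mathcal M}(w)$, $\rho^{\mathcal N}(p,f(w))=\rho^{\mathcal M}(p,w)$, and $wR^{\mathcal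 M}_a v\iff f(w)R^{\mathcal N}_a f(v)$. $\mathcal{M}$ is a local epistemic model if: (Local S5) for each $a$, the restriction of $R_a$ to $\{w\mid a\in\delta(w)\}$ is an equivalence relation; (Individually Increasing Domain) if $wR_av$ and $a\in\delta(w)$ then $a\in\delta(v)$; (Local Predicates) if $wR_av$ and $a\in\rho(p,w)$ then $a\in\rho(p,v)$; (Collectively Decreasing Domain) if $v\in\bigcap_{a\in\delta(w)}R_a(w)$ then $\delta(v)\subseteq\delta(w)$. It is proper if moreover $\bigcap_{a\in\delta(w)}R_a(w)=\{w\}$ for all $w$. For a local epistemic model, let $[w]_\delta=\bigcap_{a\in\delta(w)}R_a(w)$. The properization $\mathcal{M}^{pr}=(W^{pr},\delta^{pr},\{R^{pr}_a\},\rho^{pr})$ has $W^{pr}=\{[w]_\delta\mid w\in W\}$, $\delta^{pr}([w]_\delta)=\delta(w)$, $R^{pr}_a=\{([w]_\delta,[v]_\delta)\mid wR_av\}$, and $\rho^{pr}(p,[w]_\delta)=\rho(p,w)$. *)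

theory Defs
  imports Main "HOL-Library.Countable"
begin

datatype ('p, 'x, 'a) form =
    Pred 'p 'x
  | Top
  | Neg "('p, 'x, 'a) form"
  | Conj "('p, 'x, 'a) form" "('p, 'x, 'a) form"
  | Assign 'x 'a "('p, 'x, 'a) form"
  | Know "'x set" "('p, 'x, 'a) form"

fun fv :: "('p, 'x, 'a) form \<Rightarrow> 'x set" where
  "fv (Pred p x) = {x}"
| "fv Top = {}"
| "fv (Neg \<phi>) = fv \<phi>"
| "fv (Conj \<phi> \<psi>) = fv \<phi> \<union> fv \<psi>"
| "fv (Assign x a \<phi>) = fv \<phi> - {x}"
| "fv (Know X \<alpha>) = X"

fun wf_form :: "('p, 'x, 'a) form \<Rightarrow> bool" where
  "wf_form (Pred p x) = True"
| "wf_form Top = True"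
| "wf_form (Neg \<phi>) = wf_form \<phi>"
| "wf_form (Conj \<phi> \<psi>) = (wf_form \<phi> \<and> wf_form \<psi>)"
| "wf_form (Assign x a \<phi>) = wf_form \<phi>"
| "wf_form (Know X \<alpha>) = (finite X \<and> wf_form \<alpha> \<and> fv \<alpha> = {})"

definition sentence :: "('p, 'x, 'a) form \<Rightarrow> bool" where
  "sentence \<phi> \<longleftrightarrow> wf_form \<phi> \<and> fv \<phi> = {}"

record ('a, 'p, 'w) kmodel =
  W :: "'w set"
  dom :: "'w \<Rightarrow> 'a set"
  rel :: "'a \<Rightarrow> ('w \<times> 'w) set"
  val :: "'p \<Rightarrow> 'w \<Rightarrow> 'a set"

text \<open>Intersection of R_a(w) over a in A, inside W (empty intersection = W).\<close>
definition Rset :: "('a, 'p, 'w, 'z) kmodel_scheme \<Rightarrow> 'a set \<Rightarrow> 'w \<Rightarrow> 'w set" where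
  "Rset M A w = {v \<in> W M. \<forall>a\<in>A. (w, v) \<in> rel M a}"

definition is_model :: "('a, 'p, 'w, 'z) kmodel_scheme \<Rightarrow> bool" where
  "is_model M \<longleftrightarrow>
     W M \<noteq> {} \<and>
     (\<forall>w\<in>W M. dom M w \<noteq> {}) \<and>
     (\<forall>a. rel M a \<subseteq> W M \<times> W M) \<and>
     (\<forall>a. \<forall>w\<in>W M. a \<notin> dom M w \<longrightarrow> rel M a `` {w} = {}) \<and>
     (\<forall>p. \<forall>w\<in>W M. val M p w \<subseteq> dom M w)"

fun sat :: "('a, 'p, 'w, 'z) kmodel_scheme \<Rightarrow> 'w \<Rightarrow> ('x \<Rightarrow> 'a) \<Rightarrow> ('p, 'x, 'a) form \<Rightarrow> bool" where
  "sat M w \<sigma> (Pred p x) = (\<sigma> x \<in> val M p w)"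
| "sat M w \<sigma> Top = True"
| "sat M w \<sigma> (Neg \<phi>) = (\<not> sat M w \<sigma> \<phi>)"
| "sat M w \<sigma> (Conj \<phi> \<psi>) = (sat M w \<sigma> \<phi> \<and> sat M w \<sigma> \<psi>)"
| "sat M w \<sigma> (Assign x a \<phi>) = (a \<in> dom M w \<longrightarrow> sat M w (\<sigma>(x := a)) \<phi>)"
| "sat M w \<sigma> (Know X \<alpha>) = (\<forall>v\<in>Rset M (\<sigma> ` X) w. sat M v \<sigma> \<alpha>)"

text \<open>Truth of a sentence (every assignment is admissible for a sentence).\<close>
definition sat_sentence :: "('a, 'p, 'w, 'z) kmodel_scheme \<Rightarrow> 'w \<Rightarrow> ('p, 'x, 'a) form \<Rightarrow> bool" where
  "sat_sentence M w \<phi> \<longleftrightarrow> (\<forall>\<sigma>. sat M w \<sigma> \<phi>)"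

definition log_equiv ::
  "('a, 'p, 'w, 'z) kmodel_scheme \<Rightarrow> 'w \<Rightarrow> ('a, 'p, 'v, 'y) kmodel_scheme \<Rightarrow> 'v \<Rightarrow> 'x itself \<Rightarrow> bool" where
  "log_equiv M w N v (_ :: 'x itself) \<longleftrightarrow>
     (\<forall>\<phi> :: ('p, 'x, 'a) form. sentence \<phi> \<longrightarrow> (sat_sentence M w \<phi> \<longleftrightarrow> sat_sentence N v \<phi>))"

definition bisimulation ::
  "('a, 'p, 'w, 'z) kmodel_scheme \<Rightarrow> ('a, 'p, 'v, 'y) kmodel_scheme \<Rightarrow> ('w \<times> 'v) set \<Rightarrow> bool" where
  "bisimulation M N Z \<longleftrightarrow> Z \<subseteq> W M \<times> W N \<and>
     (\<forall>(w, v)\<in>Z.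
        dom M w = dom N v \<and> (\<forall>p. val M p w = val N p v) \<and>
        (\<forall>A. \<forall>w'\<in>Rset M A w. \<exists>v'\<in>Rset N A v. (w', v') \<in> Z) \<and>
        (\<forall>A. \<forall>v'\<in>Rset N A v. \<exists>w'\<in>Rset M A w. (w', v') \<in> Z))"

definition bisimilar ::
  "('a, 'p, 'w, 'z) kmodel_scheme \<Rightarrow> 'w \<Rightarrow> ('a, 'p, 'v, 'y) kmodel_scheme \<Rightarrow> 'v \<Rightarrow> bool" where
  "bisimilar M w N v \<longleftrightarrow> (\<exists>Z. bisimulation M N Z \<and> (w, v) \<in> Z)"

definition isomorphic ::
  "('a, 'p, 'w, 'z) kmodel_scheme \<Rightarrow> ('a, 'p, 'v, 'y) kmodel_scheme \<Rightarrow> bool" where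
  "isomorphic M N \<longleftrightarrow> (\<exists>f. bij_betw f (W M) (W N) \<and>
     (\<forall>w\<in>W M. dom N (f w) = dom M w \<and> (\<forall>p. val N p (f w) = val M p w)) \<and>
     (\<forall>a. \<forall>w\<in>W M. \<forall>v\<in>W M. (w, v) \<in> rel M a \<longleftrightarrow> (f w, f v) \<in> rel N a))"

definition local_epistemic :: "('a, 'p, 'w, 'z) kmodel_scheme \<Rightarrow> bool" where
  "local_epistemic M \<longleftrightarrow> is_model M \<and>
     (\<forall>a. equiv {w \<in> W M. a \<in> dom M w}
             (rel M a \<inter> ({w \<in> W M. a \<in> dom M w} \<times> {w \<in> W M. a \<in> dom M w}))) \<and>
     (\<forall>a w v. (w, v) \<in> rel M a \<and> a \<in> dom M w \<longrightarrow> a \<in> dom M v) \<and>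
     (\<forall>a p w v. (w, v) \<in> rel M a \<and> a \<in> val M p w \<longrightarrow> a \<in> val M p v) \<and>
     (\<forall>w\<in>W M. \<forall>v\<in>Rset M (dom M w) w. dom M v \<subseteq> dom M w)"

definition proper_local_epistemic :: "('a, 'p, 'w, 'z) kmodel_scheme \<Rightarrow> bool" where
  "proper_local_epistemic M \<longleftrightarrow> local_epistemic M \<and>
     (\<forall>w\<in>W M. Rset M (dom M w) w = {w})"

definition cls :: "('a, 'p, 'w, 'z) kmodel_scheme \<Rightarrow> 'w \<Rightarrow> 'w set" where
  "cls M w = Rset M (dom M w) w"

text \<open>A representative of a class; well-definedness is part of the theorem.\<close>
definition rep :: "('a, 'p, 'w, 'z) kmodel_scheme \<Rightarrow> 'w set \<Rightarrow> 'w" where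
  "rep M c = (SOME w. w \<in> W M \<and> cls M w = c)"

definition properization :: "('a, 'p, 'w, 'z) kmodel_scheme \<Rightarrow> ('a, 'p, 'w set) kmodel" where
  "properization M =
     \<lparr> W = cls M ` W M,
       dom = (\<lambda>c. dom M (rep M c)),
       rel = (\<lambda>a. {(cls M w, cls M v) | w v. w \<in> W M \<and> (w, v) \<in> rel M a}),
       val = (\<lambda>p c. val M p (rep M c)) \<rparr>"

end

theory Submission
  imports Defs
begin

text \<open>
  In a local epistemic model the class [w] consists of the worlds that no agent present at w
  can distinguish from w. Collectively Decreasing Domain, Individually Increasing Domain and
  Local Predicates make all members of [w] agree with w on the domain and on every predicate,
  and S5 makes them have the same class; moreover two classes are a-related iff any two of
  their representatives are. Hence the quotient map w \<mapsto> [w] is a functional bisimulation onto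
  the properization, which is proper because each class has been collapsed to a point. If
  M is already proper, the classes are singletons and the quotient map is an isomorphism.
\<close>

lemma bisimulation_sat_iff:
  assumes "bisimulation M N Z" and "(w, v) \<in> Z"
  shows "sat M w \<sigma> \<phi> \<longleftrightarrow> sat N v \<sigma> \<phi>"
  using assms(2)
proof (induction \<phi> arbitrary: w v \<sigma>)
  case (Pred p x)
  then show ?case using assms(1) unfolding bisimulation_def by auto
next
  case (Assign x a \<phi>)
  then have "dom M w = dom N v" using assms(1) unfolding bisimulation_def by auto
  then show ?case using Assign.IH[OF Assign.prems, of "\<sigma>(x := a)"] by (simp add: fun_upd_def)
next
  case (Know X \<alpha>)
  have "\<forall>w'\<in>Rset M (\<sigma> ` X) w. \<exists>v'\<in>Rset N (\<sigma> ` X) v. (w', v') \<in> Z"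
    and "\<forall>v'\<in>Rset N (\<sigma> ` X) v. \<exists>w'\<in>Rset M (\<sigma> ` X) w. (w', v') \<in> Z"
    using assms(1) Know.prems unfolding bisimulation_def by fast+
  moreover have "\<And>w' v'. (w', v') \<in> Z \<Longrightarrow> sat M w' \<sigma> \<alpha> \<longleftrightarrow> sat N v' \<sigma> \<alpha>"
    using Know.IH by blast
  ultimately show ?case unfolding sat.simps by blast
qed auto

lemma bisimilar_imp_log_equiv:
  assumes "bisimilar M w N v"
  shows "log_equiv M w N v X"
proof -
  obtain Z where "bisimulation M N Z" and "(w, v) \<in> Z"
    using assms unfolding bisimilar_def by blast
  then show ?thesis
    unfolding log_equiv_def sat_sentence_def by (simp add: bisimulation_sat_iff)
qed

lemma is_model_rel_in_W:
  assumes "is_model M" and "(w, v) \<in> rel M a"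
  shows "w \<in> W M" and "v \<in> W M"
  using assms unfolding is_model_def by blast+

lemma is_model_rel_dom:
  assumes "is_model M" and "(w, v) \<in> rel M a"
  shows "a \<in> dom M w"
  using assms is_model_rel_in_W[OF assms] unfolding is_model_def by blast

lemma local_epistemicI:
  assumes "is_model M"
    and "\<And>a w. w \<in> W M \<Longrightarrow> a \<in> dom M w \<Longrightarrow> (w, w) \<in> rel M a"
    and "\<And>a w v. (w, v) \<in> rel M a \<Longrightarrow> (v, w) \<in> rel M a"
    and "\<And>a w v u. (w, v) \<in> rel M a \<Longrightarrow> (v, u) \<in> rel M a \<Longrightarrow> (w, u) \<in> rel M a"
    and "\<And>a w v. (w, v) \<in> rel M a \<Longrightarrow> a \<in> dom M w \<Longrightarrow> a \<in> dom M v"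
    and "\<And>a p w v. (w, v) \<in> rel M a \<Longrightarrow> a \<in> val M p w \<Longrightarrow> a \<in> val M p v"
    and "\<And>w v. w \<in> W M \<Longrightarrow> v \<in> Rset M (dom M w) w \<Longrightarrow> dom M v \<subseteq> dom M w"
  shows "local_epistemic M"
  unfolding local_epistemic_def equiv_def refl_on_def sym_def trans_def
  using assms by blast

lemma rep_cls:
  assumes "w \<in> W M"
  shows "rep M (cls M w) \<in> W M" and "cls M (rep M (cls M w)) = cls M w"
  using someI[of "\<lambda>u. u \<in> W M \<and> cls M u = cls M w" w] assms
  unfolding rep_def by blast+

lemma W_properization [simp]: "W (properization M) = cls M ` W M"
  by (simp add: properization_def)

lemma rel_properizationE:
  assumes "(c, d) \<in> rel (properization M) a"
  obtains w v where "c = cls M w" "d = cls M v" "w \<in> W M" "(w, v) \<in> rel M a"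
  using assms unfolding properization_def by auto

context
  fixes M :: "('a, 'p, 'w, 'z) kmodel_scheme"
  assumes local: "local_epistemic M"
begin

lemma local_epistemic_is_model: "is_model M"
  using local unfolding local_epistemic_def by blast

lemma local_epistemic_rel_dom:
  assumes "(w, v) \<in> rel M a"
  shows "a \<in> dom M w" and "a \<in> dom M v"
  using is_model_rel_dom[OF local_epistemic_is_model assms] assms local
  unfolding local_epistemic_def by blast+

lemma local_epistemic_rel_in_W:
  assumes "(w, v) \<in> rel M a"
  shows "w \<in> W M" and "v \<in> W M"
  using is_model_rel_in_W[OF local_epistemic_is_model assms] by blast+

lemma local_epistemic_equiv: "equiv {w \<in> W M. a \<in> dom M w} (rel M a)"
proof -
  let ?D = "{w \<in> W M. a \<in> dom M w}"
  have "rel M a \<subseteq> ?D \<times> ?D"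
    using local_epistemic_rel_dom local_epistemic_rel_in_W by auto
  then have "rel M a \<inter> ?D \<times> ?D = rel M a" by blast
  moreover have "equiv ?D (rel M a \<inter> ?D \<times> ?D)"
    using local unfolding local_epistemic_def by blast
  ultimately show ?thesis by simp
qed

lemma local_epistemic_rel_refl: "w \<in> W M \<Longrightarrow> a \<in> dom M w \<Longrightarrow> (w, w) \<in> rel M a"
  using local_epistemic_equiv[of a] unfolding equiv_def by (blast dest: refl_onD)

lemma local_epistemic_rel_sym: "(w, v) \<in> rel M a \<Longrightarrow> (v, w) \<in> rel M a"
  using local_epistemic_equiv[of a] unfolding equiv_def by (blast dest: symD)

lemma local_epistemic_rel_trans:
  "(w, v) \<in> rel M a \<Longrightarrow> (v, u) \<in> rel M a \<Longrightarrow> (w, u) \<in> rel M a"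
  using local_epistemic_equiv[of a] unfolding equiv_def by (blast dest: transD)

lemma local_epistemic_val_rel: "(w, v) \<in> rel M a \<Longrightarrow> a \<in> val M p w \<Longrightarrow> a \<in> val M p v"
  using local unfolding local_epistemic_def by blast

lemma local_epistemic_dom_decreasing:
  "w \<in> W M \<Longrightarrow> v \<in> Rset M (dom M w) w \<Longrightarrow> dom M v \<subseteq> dom M w"
  using local unfolding local_epistemic_def by blast

lemma local_epistemic_val_subset: "w \<in> W M \<Longrightarrow> val M p w \<subseteq> dom M w"
  using local_epistemic_is_model unfolding is_model_def by blast

lemma cls_self: "w \<in> W M \<Longrightarrow> w \<in> cls M w"
  using local_epistemic_rel_refl unfolding cls_def Rset_def by blast

lemma mem_cls_same:
  assumes w: "w \<in> W M" and v: "v \<in> cls M w"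
  shows "dom M v = dom M w" and "val M p v = val M p w" and "cls M v = cls M w"
proof -
  have vW: "v \<in> W M" and R: "\<And>a. a \<in> dom M w \<Longrightarrow> (w, v) \<in> rel M a"
    using v unfolding cls_def Rset_def by auto
  have "dom M v \<subseteq> dom M w"
    using local_epistemic_dom_decreasing w v unfolding cls_def by blast
  moreover have "dom M w \<subseteq> dom M v"
    using R local_epistemic_rel_dom(2) by blast
  ultimately show dom_eq: "dom M v = dom M w" by blast
  show "val M p v = val M p w"
  proof (intro equalityI subsetI)
    fix a assume a: "a \<in> val M p v"
    then have "a \<in> dom M w" using local_epistemic_val_subset[OF vW] dom_eq by blast
    with a show "a \<in> val M p w"
      using R local_epistemic_rel_sym local_epistemic_val_rel by blast
  next
    fix a assume a: "a \<in> val M p w"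
    then have "a \<in> dom M w" using local_epistemic_val_subset[OF w] by blast
    with a show "a \<in> val M p v"
      using R local_epistemic_val_rel by blast
  qed
  have "(v, u) \<in> rel M a \<longleftrightarrow> (w, u) \<in> rel M a" if "a \<in> dom M w" for a u
    using R[OF that] local_epistemic_rel_sym local_epistemic_rel_trans by metis
  then show "cls M v = cls M w"
    unfolding cls_def Rset_def dom_eq by auto
qed

lemma cls_eq_same:
  assumes "w \<in> W M" and "w' \<in> W M" and "cls M w = cls M w'"
  shows "dom M w = dom M w'" and "val M p w = val M p w'"
proof -
  have "w' \<in> cls M w" using cls_self[OF assms(2)] assms(3) by simp
  then show "dom M w = dom M w'" and "val M p w = val M p w'"
    using mem_cls_same[OF assms(1)] by simp_all
qed

lemma dom_properization_cls:
  assumes "w \<in> W M"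
  shows "dom (properization M) (cls M w) = dom M w"
  using cls_eq_same(1)[OF rep_cls(1)[OF assms] assms rep_cls(2)[OF assms]]
  by (simp add: properization_def)

lemma val_properization_cls:
  assumes "w \<in> W M"
  shows "val (properization M) p (cls M w) = val M p w"
  using cls_eq_same(2)[OF rep_cls(1)[OF assms] assms rep_cls(2)[OF assms]]
  by (simp add: properization_def)

lemma rel_properization_cls_iff:
  assumes w: "w \<in> W M" and v: "v \<in> W M"
  shows "(cls M w, cls M v) \<in> rel (properization M) a \<longleftrightarrow> (w, v) \<in> rel M a"
proof
  assume "(cls M w, cls M v) \<in> rel (properization M) a"
  then obtain w1 v1 where eq: "cls M w = cls M w1" "cls M v = cls M v1"
    and R: "(w1, v1) \<in> rel M a"
    by (elim rel_properizationE) auto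
  have "w \<in> cls M w1" "v \<in> cls M v1"
    using eq cls_self w v by auto
  then have "(w1, w) \<in> rel M a" "(v1, v) \<in> rel M a"
    using local_epistemic_rel_dom[OF R] unfolding cls_def Rset_def by blast+
  with R show "(w, v) \<in> rel M a"
    using local_epistemic_rel_sym local_epistemic_rel_trans by blast
next
  assume "(w, v) \<in> rel M a"
  then show "(cls M w, cls M v) \<in> rel (properization M) a"
    using w unfolding properization_def by auto
qed

lemma Rset_properization_cls:
  assumes "w \<in> W M"
  shows "Rset (properization M) A (cls M w) = cls M ` Rset M A w"
  using assms rel_properization_cls_iff unfolding Rset_def by auto

lemma rel_properization_dom:
  assumes "(c, d) \<in> rel (properization M) a"
  shows "a \<in> dom (properization M) c" and "a \<in> dom (properization M) d"
proof -
  obtain w v where "c = cls M w" "d = cls M v" and R: "(w, v) \<in> rel M a"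
    using assms by (rule rel_properizationE)
  then show "a \<in> dom (properization M) c" and "a \<in> dom (properization M) d"
    using local_epistemic_rel_dom[OF R] local_epistemic_rel_in_W[OF R]
    by (simp_all add: dom_properization_cls)
qed

lemma is_model_properization: "is_model (properization M)"
proof -
  let ?P = "properization M"
  have "W ?P \<noteq> {}" and "\<forall>c\<in>W ?P. dom ?P c \<noteq> {}"
    and "\<forall>p. \<forall>c\<in>W ?P. val ?P p c \<subseteq> dom ?P c"
    using local_epistemic_is_model
    by (auto simp: is_model_def dom_properization_cls val_properization_cls)
  moreover have "\<forall>a. rel ?P a \<subseteq> W ?P \<times> W ?P"
    by (auto elim!: rel_properizationE dest: local_epistemic_rel_in_W)
  moreover have "\<forall>a. \<forall>c\<in>W ?P. a \<notin> dom ?P c \<longrightarrow> rel ?P a `` {c} = {}"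
    using rel_properization_dom(1) by blast
  ultimately show ?thesis unfolding is_model_def by blast
qed

lemma Rset_properization_dom_eq_singleton:
  assumes "c \<in> W (properization M)"
  shows "Rset (properization M) (dom (properization M) c) c = {c}"
proof -
  obtain w where w: "w \<in> W M" and c: "c = cls M w"
    using assms by auto
  have "Rset (properization M) (dom (properization M) c) c = cls M ` Rset M (dom M w) w"
    using w c by (simp add: Rset_properization_cls dom_properization_cls)
  also have "\<dots> = cls M ` cls M w"
    by (simp add: cls_def)
  also have "\<dots> = {cls M w}"
    using mem_cls_same(3)[OF w] cls_self[OF w] by blast
  finally show ?thesis using c by simp
qed

lemma local_epistemic_properization: "local_epistemic (properization M)"
proof (rule local_epistemicI)
  let ?P = "properization M"
  have rel_cls: "\<exists>w v. w \<in> W M \<and> v \<in> W M \<and> c = cls M w \<and> d = cls M v"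
    if "(c, d) \<in> rel ?P a" for a c d
    using that by (elim rel_properizationE) (blast dest: local_epistemic_rel_in_W)
  show "is_model ?P" by (rule is_model_properization)
  show "(c, c) \<in> rel ?P a" if "c \<in> W ?P" and "a \<in> dom ?P c" for a c
    using that local_epistemic_rel_refl
    by (auto simp: dom_properization_cls rel_properization_cls_iff)
  show "(d, c) \<in> rel ?P a" if "(c, d) \<in> rel ?P a" for a c d
    using that rel_cls[OF that] local_epistemic_rel_sym
    by (auto simp: rel_properization_cls_iff)
  show "(c, e) \<in> rel ?P a" if "(c, d) \<in> rel ?P a" and "(d, e) \<in> rel ?P a" for a c d e
    using that rel_cls[OF that(1)] rel_cls[OF that(2)] local_epistemic_rel_trans
    by (auto simp: rel_properization_cls_iff)
  show "a \<in> dom ?P d" if "(c, d) \<in> rel ?P a" and "a \<in> dom ?P c" for a c d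
    using rel_properization_dom(2)[OF that(1)] .
  show "a \<in> val ?P p d" if "(c, d) \<in> rel ?P a" and "a \<in> val ?P p c" for a p c d
    using that rel_cls[OF that(1)] local_epistemic_val_rel
    by (auto simp: rel_properization_cls_iff val_properization_cls)
  show "dom ?P d \<subseteq> dom ?P c" if "c \<in> W ?P" and "d \<in> Rset ?P (dom ?P c) c" for c d
    using that Rset_properization_dom_eq_singleton by simp
qed

lemma proper_local_epistemic_properization: "proper_local_epistemic (properization M)"
  unfolding proper_local_epistemic_def
  using local_epistemic_properization Rset_properization_dom_eq_singleton by blast

lemma bisimulation_properization:
  "bisimulation M (properization M) ((\<lambda>w. (w, cls M w)) ` W M)"
proof -
  have "Rset M A w \<subseteq> W M" for A w unfolding Rset_def by blast
  then show ?thesis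
    unfolding bisimulation_def
    by (fastforce simp: dom_properization_cls val_properization_cls Rset_properization_cls)
qed

lemma bisimilar_properization: "w \<in> W M \<Longrightarrow> bisimilar M w (properization M) (cls M w)"
  unfolding bisimilar_def using bisimulation_properization by blast

lemma isomorphic_properization:
  assumes "proper_local_epistemic M"
  shows "isomorphic M (properization M)"
proof -
  have "cls M w = {w}" if "w \<in> W M" for w
    using assms that unfolding proper_local_epistemic_def cls_def by blast
  then have "inj_on (cls M) (W M)" by (auto intro: inj_onI)
  then have "bij_betw (cls M) (W M) (W (properization M))"
    by (simp add: bij_betw_def)
  then show ?thesis
    unfolding isomorphic_def
    using dom_properization_cls val_properization_cls rel_properization_cls_iff by blast
qed

end

theorem proposition1:
  fixes M :: "('a :: finite, 'p :: countable, 'w) kmodel"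
    and X :: "'x :: countable itself"
  assumes "local_epistemic M"
  shows "(\<forall>w\<in>W M. \<forall>w'\<in>W M. cls M w = cls M w' \<longrightarrow>
            dom M w = dom M w' \<and> (\<forall>p. val M p w = val M p w'))
       \<and> proper_local_epistemic (properization M)
       \<and> (\<forall>w\<in>W M. bisimilar M w (properization M) (cls M w)
                    \<and> log_equiv M w (properization M) (cls M w) X)
       \<and> (proper_local_epistemic M \<longrightarrow> isomorphic M (properization M))"
proof (intro conjI)
  have "dom M w = dom M w' \<and> (\<forall>p. val M p w = val M p w')"
    if "w \<in> W M" and "w' \<in> W M" and "cls M w = cls M w'" for w w'
    using cls_eq_same[OF assms that] by blast
  then show "\<forall>w\<in>W M. \<forall>w'\<in>W M. cls M w = cls M w' \<longrightarrow>
               dom M w = dom M w' \<and> (\<forall>p. val M p w = val M p w')"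
    by blast
  show "proper_local_epistemic (properization M)"
    using proper_local_epistemic_properization[OF assms] .
  show "\<forall>w\<in>W M. bisimilar M w (properization M) (cls M w)
                 \<and> log_equiv M w (properization M) (cls M w) X"
    by (simp add: bisimilar_properization[OF assms] bisimilar_imp_log_equiv)
  show "proper_local_epistemic M \<longrightarrow> isomorphic M (properization M)"
    using isomorphic_properization[OF assms] ..
qed

end
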